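(* Fix $\alpha\in(0,1)$ and integers $k\ge1$, $m\ge1$. Let $(P_i)_{i\ge0}$ be the $\alpha$-random walk, $X_i(m)=1$ if $P_i$ is visible at level $m$ (else $0$), $Y_i(m)=X_i(m)\cdots X_{i+k-1}(m)$ and $\overline S_{n,k}(m)=\frac1n\sum_{i=1}^nY_i(m)$. Then $$\mathbf V(\overline S_{n,k}(m))\ll\frac{D_m^4}{\sqrt n},$$ with implied constant depending only on $\alpha$ and $k$.
   Context: The $\alpha$-random walk: $P_0=(0,0)$ and $P_{i+1}=P_i+(1,0)$ with probability $\alpha$, $P_{i+1}=P_i+(0,1)$ with probability $1-\alpha$, independently. A lattice point $(a,b)$ is visible at level $m$ if no prime $p<m$ divides both $a$ and $b$. $D_m=\prod_{p<m}p$ over primes (empty product $=1$). $\mathbf V$ denotes variance. *)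

theory Defs
  imports "HOL-Probability.Probability" "HOL-Computational_Algebra.Primes"
begin

text \<open>Probability space of the steps: an i.i.d. sequence of Bernoulli(alpha) booleans;
  step j is True (move by (1,0)) with probability alpha, False (move by (0,1)) otherwise.\<close>
definition walk_space :: "real \<Rightarrow> bool stream measure" where
  "walk_space \<alpha> = stream_space (measure_pmf (bernoulli_pmf \<alpha>))"

definition walk_pos :: "bool stream \<Rightarrow> nat \<Rightarrow> nat \<times> nat" where
  "walk_pos \<omega> i = (card {j. j < i \<and> \<omega> !! j}, card {j. j < i \<and> \<not> \<omega> !! j})"

definition visible :: "nat \<Rightarrow> nat \<times> nat \<Rightarrow> bool" where
  "visible m ab \<longleftrightarrow> (\<forall>p::nat. prime p \<and> p < m \<longrightarrow> \<not> (p dvd fst ab \<and> p dvd snd ab))"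

definition D :: "nat \<Rightarrow> nat" where
  "D m = (\<Prod>p\<in>{p::nat. prime p \<and> p < m}. p)"

definition Xv :: "nat \<Rightarrow> nat \<Rightarrow> bool stream \<Rightarrow> real" where
  "Xv m i \<omega> = (if visible m (walk_pos \<omega> i) then 1 else 0)"

definition Yv :: "nat \<Rightarrow> nat \<Rightarrow> nat \<Rightarrow> bool stream \<Rightarrow> real" where
  "Yv k m i \<omega> = (\<Prod>j<k. Xv m (i + j) \<omega>)"

definition Sbar :: "nat \<Rightarrow> nat \<Rightarrow> nat \<Rightarrow> bool stream \<Rightarrow> real" where
  "Sbar n k m \<omega> = (1 / real n) * (\<Sum>i=1..n. Yv k m i \<omega>)"

definition var :: "'a measure \<Rightarrow> ('a \<Rightarrow> real) \<Rightarrow> real" where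
  "var M X = (\<integral>x. (X x - (\<integral>y. X y \<partial>M))\<^sup>2 \<partial>M)"

end

theory Submission
  imports Defs
begin

text \<open>
  Let \<open>Y\<^sub>j\<close> indicate that the walk is visible at the times \<open>j, ..., j + k - 1\<close>. Visibility
  at level \<open>m\<close> only depends on the position modulo \<open>D m\<close>. Hence, given the first \<open>u \<le> j\<close>
  steps, the conditional probability of \<open>Y\<^sub>j = 1\<close> is \<open>(P^(j - u) h\<^sub>j) x\<close>, where \<open>x\<close> is the
  number of horizontal steps so far, \<open>h\<^sub>j\<close> is \<open>D m\<close>-periodic with values in \<open>[0, 1]\<close>, and
  \<open>P \<phi> x = (1 - \<alpha>) \<phi> x + \<alpha> \<phi> (x + 1)\<close>. With \<open>u = i + k\<close> this bounds the covariance of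
  \<open>Y\<^sub>i\<close> and \<open>Y\<^sub>j\<close> by the oscillation, hence by the total variation over one period, of
  \<open>P^(j - i - k) h\<^sub>j\<close>.

  On periodic functions, \<open>P\<close> lowers the sum of squares over a period by exactly
  \<open>\<alpha> (1 - \<alpha>)\<close> times the sum of squared increments. Telescoping, the squared increments of
  \<open>P^t h\<close>, summed over \<open>t\<close> and a period, are at most \<open>D m / (\<alpha> (1 - \<alpha>))\<close>, and two applications
  of Cauchy--Schwarz bound the sum of the total variations of \<open>P^t h\<close>, \<open>t < n\<close>, by
  \<open>D m sqrt n / sqrt (\<alpha> (1 - \<alpha>))\<close>. Summing over the pairs \<open>(i, j)\<close> gives the variance bound
  \<open>2 D m / sqrt (\<alpha> (1 - \<alpha>) n) + 2 k / n\<close>.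
\<close>

section \<open>Expectations over Bernoulli lists\<close>

primrec list_expect :: "real \<Rightarrow> nat \<Rightarrow> (bool list \<Rightarrow> real) \<Rightarrow> real" where
  "list_expect a 0 f = f []"
| "list_expect a (Suc N) f =
     (1 - a) * list_expect a N (\<lambda>xs. f (False # xs)) + a * list_expect a N (\<lambda>xs. f (True # xs))"

lemma list_expect_cong:
  "(\<And>xs. length xs = N \<Longrightarrow> f xs = g xs) \<Longrightarrow> list_expect a N f = list_expect a N g"
proof (induction N arbitrary: f g)
  case (Suc N)
  have "list_expect a N (\<lambda>xs. f (x # xs)) = list_expect a N (\<lambda>xs. g (x # xs))" for x
    by (rule Suc.IH) (simp add: Suc.prems)
  then show ?case by simp
qed simp

lemma list_expect_const [simp]: "list_expect a N (\<lambda>_. c) = c"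
  by (induction N) (simp_all add: algebra_simps)

lemma list_expect_add:
  "list_expect a N (\<lambda>xs. f xs + g xs) = list_expect a N f + list_expect a N g"
  by (induction N arbitrary: f g) (simp_all add: algebra_simps)

lemma list_expect_diff:
  "list_expect a N (\<lambda>xs. f xs - g xs) = list_expect a N f - list_expect a N g"
  by (induction N arbitrary: f g) (simp_all add: right_diff_distrib)

lemma list_expect_cmult: "list_expect a N (\<lambda>xs. c * f xs) = c * list_expect a N f"
  by (induction N arbitrary: f) (simp_all add: algebra_simps)

lemma list_expect_sum:
  "list_expect a N (\<lambda>xs. \<Sum>i\<in>I. f i xs) = (\<Sum>i\<in>I. list_expect a N (f i))"
  by (induction N arbitrary: f) (simp_all add: sum_distrib_left sum.distrib)

lemma list_expect_mono:
  assumes "0 \<le> a" "a \<le> 1" "\<And>xs. length xs = N \<Longrightarrow> f xs \<le> g xs"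
  shows "list_expect a N f \<le> list_expect a N g"
  using assms(3)
proof (induction N arbitrary: f g)
  case (Suc N)
  have "list_expect a N (\<lambda>xs. f (x # xs)) \<le> list_expect a N (\<lambda>xs. g (x # xs))" for x
    by (rule Suc.IH) (simp add: Suc.prems)
  then show ?case
    using assms(1,2) by (simp add: add_mono mult_left_mono)
qed simp

lemma list_expect_bounds:
  assumes "0 \<le> a" "a \<le> 1" "\<And>xs. length xs = N \<Longrightarrow> lo \<le> f xs \<and> f xs \<le> hi"
  shows "lo \<le> list_expect a N f \<and> list_expect a N f \<le> hi"
  using list_expect_mono[OF assms(1,2), of N "\<lambda>_. lo" f]
    list_expect_mono[OF assms(1,2), of N f "\<lambda>_. hi"] assms(3) by simp

lemma list_expect_append:
  "list_expect a (M + N) f = list_expect a M (\<lambda>xs. list_expect a N (\<lambda>ys. f (xs @ ys)))"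
  by (induction M arbitrary: f) simp_all

lemma list_expect_prefix:
  assumes "M \<le> N" "\<And>xs ys. length xs = M \<Longrightarrow> f (xs @ ys) = g xs"
  shows "list_expect a N f = list_expect a M g"
proof -
  have "list_expect a N f = list_expect a M (\<lambda>xs. list_expect a (N - M) (\<lambda>ys. f (xs @ ys)))"
    using list_expect_append[of a M "N - M" f] assms(1) by simp
  also have "\<dots> = list_expect a M g"
    by (rule list_expect_cong) (simp add: assms(2))
  finally show ?thesis .
qed

lemma list_expect_variance:
  "list_expect a N (\<lambda>xs. (f xs - list_expect a N f)\<^sup>2)
     = list_expect a N (\<lambda>xs. (f xs)\<^sup>2) - (list_expect a N f)\<^sup>2"
proof -
  define c where "c = list_expect a N f"
  have "(\<lambda>xs. (f xs - c)\<^sup>2) = (\<lambda>xs. ((f xs)\<^sup>2 - (2 * c) * f xs) + c\<^sup>2)"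
    by (simp add: power2_eq_square algebra_simps)
  then show ?thesis
    by (simp add: list_expect_add list_expect_diff list_expect_cmult c_def power2_eq_square)
qed

lemma list_expect_cov_le:
  assumes a: "0 \<le> a" "a \<le> 1" and f: "\<And>xs. length xs = u \<Longrightarrow> 0 \<le> f xs \<and> f xs \<le> 1"
    and W: "\<And>xs ys. length xs = u \<Longrightarrow> length ys = u \<Longrightarrow> W xs - W ys \<le> T" and "0 \<le> T"
  shows "list_expect a u (\<lambda>xs. f xs * W xs) - list_expect a u f * list_expect a u W \<le> T"
proof -
  let ?EW = "list_expect a u W"
  have "list_expect a u (\<lambda>xs. f xs * W xs) - list_expect a u f * ?EW
      = list_expect a u (\<lambda>xs. f xs * (W xs - ?EW))"
    by (simp add: right_diff_distrib list_expect_diff mult.commute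
        list_expect_cmult[of a u ?EW f, symmetric])
  also have "\<dots> \<le> list_expect a u (\<lambda>_. T)"
  proof (rule list_expect_mono[OF a])
    fix xs :: "bool list" assume xs: "length xs = u"
    have "W xs - ?EW = list_expect a u (\<lambda>ys. W xs - W ys)"
      by (simp add: list_expect_diff)
    also have "\<dots> \<le> T"
      using list_expect_mono[OF a, of u "\<lambda>ys. W xs - W ys" "\<lambda>_. T"] W[OF xs] by simp
    finally have "W xs - ?EW \<le> T" .
    moreover have "f xs * (W xs - ?EW) \<le> max 0 (W xs - ?EW)"
      using f[OF xs] by (cases "0 \<le> W xs - ?EW") (auto simp: mult_left_le_one_le mult_nonneg_nonpos)
    ultimately show "f xs * (W xs - ?EW) \<le> T"
      using \<open>0 \<le> T\<close> by linarith
  qed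
  finally show ?thesis by simp
qed

lemma measurable_stake_bool:
  "stake N \<in> stream_space (measure_pmf p) \<rightarrow>\<^sub>M count_space (UNIV :: bool list set)"
proof -
  have sets_eq: "sets (stream_space (measure_pmf p)) = sets (stream_space (count_space UNIV))"
    by (rule sets_stream_space_cong) simp
  show ?thesis
    unfolding measurable_cong_sets[OF sets_eq refl] by (rule measurable_stake)
qed

lemma nn_integral_stake:
  assumes a: "0 \<le> a" "a \<le> 1" and f: "\<And>xs. length xs = N \<Longrightarrow> 0 \<le> f xs"
  shows "(\<integral>\<^sup>+\<omega>. ennreal (f (stake N \<omega>)) \<partial>stream_space (measure_pmf (bernoulli_pmf a)))
           = ennreal (list_expect a N f)"
  using f
proof (induction N arbitrary: f)
  case 0
  interpret prob_space "stream_space (measure_pmf (bernoulli_pmf a))"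
    by (rule prob_space.prob_space_stream_space) (rule prob_space_measure_pmf)
  show ?case by (simp add: emeasure_space_1)
next
  case (Suc N)
  define T where "T = list_expect a N (\<lambda>xs. f (True # xs))"
  define F where "F = list_expect a N (\<lambda>xs. f (False # xs))"
  have TF: "0 \<le> T" "0 \<le> F"
    using list_expect_mono[OF a, of N "\<lambda>_. 0" "\<lambda>xs. f (True # xs)"]
      list_expect_mono[OF a, of N "\<lambda>_. 0" "\<lambda>xs. f (False # xs)"] Suc.prems
    by (simp_all add: T_def F_def)
  have "(\<integral>\<^sup>+\<omega>. ennreal (f (stake (Suc N) \<omega>)) \<partial>stream_space (measure_pmf (bernoulli_pmf a)))
      = (\<integral>\<^sup>+x. (\<integral>\<^sup>+\<omega>. ennreal (f (x # stake N \<omega>)) \<partial>stream_space (measure_pmf (bernoulli_pmf a)))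
           \<partial>measure_pmf (bernoulli_pmf a))"
    using measurable_stake_bool[of "Suc N"]
    by (subst prob_space.nn_integral_stream_space[OF prob_space_measure_pmf]) simp_all
  also have "\<dots> = (\<integral>\<^sup>+x. ennreal (list_expect a N (\<lambda>xs. f (x # xs))) \<partial>measure_pmf (bernoulli_pmf a))"
    by (rule nn_integral_cong) (rule Suc.IH, simp add: Suc.prems)
  also have "\<dots> = ennreal T * ennreal a + ennreal F * ennreal (1 - a)"
    using a by (simp add: T_def F_def)
  also have "\<dots> = ennreal (T * a) + ennreal (F * (1 - a))"
    using a TF by (simp add: ennreal_mult)
  also have "\<dots> = ennreal (T * a + F * (1 - a))"
    using a TF by (intro ennreal_plus[symmetric]) auto
  also have "T * a + F * (1 - a) = list_expect a (Suc N) f"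
    by (simp add: T_def F_def algebra_simps)
  finally show ?case .
qed

lemma integral_stake:
  assumes a: "0 \<le> a" "a \<le> 1"
  shows "(\<integral>\<omega>. f (stake N \<omega>) \<partial>stream_space (measure_pmf (bernoulli_pmf a))) = list_expect a N f"
proof -
  let ?S = "stream_space (measure_pmf (bernoulli_pmf a))"
  interpret prob_space ?S
    by (rule prob_space.prob_space_stream_space) (rule prob_space_measure_pmf)
  have fin: "finite {xs::bool list. length xs = N}"
    using finite_lists_length_eq[of "UNIV :: bool set" N] by simp
  define c where "c = (\<Sum>xs\<in>{xs. length xs = N}. \<bar>f xs\<bar>)"
  have c: "\<bar>f xs\<bar> \<le> c" if "length xs = N" for xs
    unfolding c_def using fin that by (intro member_le_sum) auto
  define g where "g = (\<lambda>xs. f xs + c)"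
  have g: "0 \<le> g xs" if "length xs = N" for xs
    using c[OF that] by (simp add: g_def)
  have g_meas: "(\<lambda>\<omega>. g (stake N \<omega>)) \<in> borel_measurable ?S"
    using measurable_stake_bool[of N] by measurable
  have g_int: "integrable ?S (\<lambda>\<omega>. g (stake N \<omega>))"
  proof (rule integrable_const_bound[where B = "2 * c"])
    show "AE \<omega> in ?S. norm (g (stake N \<omega>)) \<le> 2 * c"
    proof (rule AE_I2)
      fix \<omega>
      have "\<bar>f (stake N \<omega>)\<bar> \<le> c" by (rule c) simp
      then show "norm (g (stake N \<omega>)) \<le> 2 * c" by (simp add: g_def)
    qed
  qed (rule g_meas)
  have g_integral: "(\<integral>\<omega>. g (stake N \<omega>) \<partial>?S) = list_expect a N f + c"
  proof -
    have "(\<integral>\<omega>. g (stake N \<omega>) \<partial>?S) = enn2real (\<integral>\<^sup>+\<omega>. ennreal (g (stake N \<omega>)) \<partial>?S)"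
      by (rule integral_eq_nn_integral) (auto intro!: AE_I2 g g_meas)
    also have "\<dots> = list_expect a N g"
      using list_expect_bounds[OF a, of N 0 g "2 * c"] c g
      by (subst nn_integral_stake[OF a g]) (auto simp: g_def abs_le_iff)
    finally show ?thesis
      using list_expect_add[of a N f "\<lambda>_. c"] by (simp add: g_def)
  qed
  have "(\<integral>\<omega>. f (stake N \<omega>) \<partial>?S) = (\<integral>\<omega>. g (stake N \<omega>) - c \<partial>?S)"
    by (simp add: g_def)
  also have "\<dots> = list_expect a N f"
    using g_int g_integral by (simp add: prob_space)
  finally show ?thesis .
qed

section \<open>An averaging operator on periodic functions\<close>

definition step_avg :: "real \<Rightarrow> (nat \<Rightarrow> real) \<Rightarrow> nat \<Rightarrow> real" where
  "step_avg a \<phi> x = (1 - a) * \<phi> x + a * \<phi> (Suc x)"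

definition count_true :: "bool list \<Rightarrow> nat" where
  "count_true xs = length (filter id xs)"

lemma count_true_simps [simp]:
  "count_true [] = 0" "count_true (True # xs) = Suc (count_true xs)"
  "count_true (False # xs) = count_true xs" "count_true (xs @ ys) = count_true xs + count_true ys"
  by (simp_all add: count_true_def)

lemma list_expect_count_true:
  "list_expect a t (\<lambda>cs. \<phi> (x + count_true cs)) = (step_avg a ^^ t) \<phi> x"
proof (induction t arbitrary: x)
  case (Suc t)
  have "list_expect a (Suc t) (\<lambda>cs. \<phi> (x + count_true cs))
      = (1 - a) * (step_avg a ^^ t) \<phi> x + a * (step_avg a ^^ t) \<phi> (Suc x)"
    using Suc.IH[of x] Suc.IH[of "Suc x"] by simp
  also have "\<dots> = step_avg a ((step_avg a ^^ t) \<phi>) x"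
    by (simp only: step_avg_def)
  finally show ?case by simp
qed simp

definition periodic :: "nat \<Rightarrow> (nat \<Rightarrow> real) \<Rightarrow> bool" where
  "periodic L f \<longleftrightarrow> (\<forall>x. f (x + L) = f x)"

lemma periodic_step_avg: "periodic L f \<Longrightarrow> periodic L (step_avg a f)"
  unfolding periodic_def step_avg_def by (metis add_Suc)

lemma periodic_iter_step_avg: "periodic L f \<Longrightarrow> periodic L ((step_avg a ^^ t) f)"
  by (induction t) (simp_all add: periodic_step_avg)

lemma periodic_mod:
  assumes "periodic L f"
  shows "f x = f (x mod L)"
proof -
  have "f (r + L * q) = f r" for r q
  proof (induction q)
    case (Suc q)
    have "f (r + L * Suc q) = f ((r + L * q) + L)" by (simp add: algebra_simps)
    also have "\<dots> = f (r + L * q)" using assms by (simp add: periodic_def)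
    finally show ?case using Suc by simp
  qed simp
  then show ?thesis by (metis mod_mult_div_eq mult.commute)
qed

definition total_variation :: "nat \<Rightarrow> (nat \<Rightarrow> real) \<Rightarrow> real" where
  "total_variation L f = (\<Sum>x<L. \<bar>f (Suc x) - f x\<bar>)"

definition sq_variation :: "nat \<Rightarrow> (nat \<Rightarrow> real) \<Rightarrow> real" where
  "sq_variation L f = (\<Sum>x<L. (f (Suc x) - f x)\<^sup>2)"

lemma total_variation_nonneg: "0 \<le> total_variation L f"
  by (simp add: total_variation_def sum_nonneg)

lemma diff_le_total_variation:
  assumes "x < L" "y < L"
  shows "f y - f x \<le> total_variation L f"
proof (cases "x \<le> y")
  case True
  have "f y - f x = (\<Sum>z=x..<y. f (Suc z) - f z)"
    using True by (simp add: sum_Suc_diff')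
  also have "\<dots> \<le> (\<Sum>z=x..<y. \<bar>f (Suc z) - f z\<bar>)"
    by (rule sum_mono) simp
  also have "\<dots> \<le> total_variation L f"
    unfolding total_variation_def using assms by (intro sum_mono2) auto
  finally show ?thesis .
next
  case False
  have "f x - f y = (\<Sum>z=y..<x. f (Suc z) - f z)"
    using False by (simp add: sum_Suc_diff')
  then have "f y - f x = (\<Sum>z=y..<x. f z - f (Suc z))"
    by (simp add: sum_subtractf)
  also have "\<dots> \<le> (\<Sum>z=y..<x. \<bar>f (Suc z) - f z\<bar>)"
    by (rule sum_mono) simp
  also have "\<dots> \<le> total_variation L f"
    unfolding total_variation_def using assms by (intro sum_mono2) auto
  finally show ?thesis .
qed

lemma periodic_diff_le_total_variation:
  assumes "periodic L f" "0 < L"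
  shows "f y - f x \<le> total_variation L f"
  using diff_le_total_variation[of "x mod L" L "y mod L" f] assms
    periodic_mod[OF assms(1), of x] periodic_mod[OF assms(1), of y]
  by simp

lemma total_variation_sq_le: "(total_variation L f)\<^sup>2 \<le> real L * sq_variation L f"
  using Cauchy_Schwarz_ineq_sum[of "\<lambda>_. 1" "\<lambda>x. \<bar>f (Suc x) - f x\<bar>" "{..<L}"]
  by (simp add: total_variation_def sq_variation_def)

lemma energy_step_avg:
  assumes "periodic L f"
  shows "(\<Sum>x<L. (step_avg a f x)\<^sup>2) = (\<Sum>x<L. (f x)\<^sup>2) - a * (1 - a) * sq_variation L f"
proof -
  have pointwise: "(step_avg a f x)\<^sup>2
      = (1 - a) * (f x)\<^sup>2 + a * (f (Suc x))\<^sup>2 - a * (1 - a) * (f (Suc x) - f x)\<^sup>2" for x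
    by (simp add: step_avg_def power2_eq_square algebra_simps)
  have "(\<Sum>x<L. (f (Suc x))\<^sup>2) + (f 0)\<^sup>2 = (\<Sum>x<L. (f x)\<^sup>2) + (f L)\<^sup>2"
    using sum.lessThan_Suc_shift[of "\<lambda>x. (f x)\<^sup>2" L] by simp
  moreover have "f L = f 0"
    using assms by (metis add_0 periodic_def)
  ultimately have shift: "(\<Sum>x<L. (f (Suc x))\<^sup>2) = (\<Sum>x<L. (f x)\<^sup>2)"
    by simp
  have "(\<Sum>x<L. (step_avg a f x)\<^sup>2) = (1 - a) * (\<Sum>x<L. (f x)\<^sup>2)
      + a * (\<Sum>x<L. (f (Suc x))\<^sup>2) - a * (1 - a) * sq_variation L f"
    by (simp add: pointwise sq_variation_def sum.distrib sum_subtractf sum_distrib_left)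
  then show ?thesis
    by (simp add: shift algebra_simps)
qed

lemma energy_iter_step_avg:
  assumes "periodic L \<phi>"
  shows "(\<Sum>x<L. ((step_avg a ^^ n) \<phi> x)\<^sup>2)
       = (\<Sum>x<L. (\<phi> x)\<^sup>2) - a * (1 - a) * (\<Sum>t<n. sq_variation L ((step_avg a ^^ t) \<phi>))"
proof (induction n)
  case (Suc n)
  then show ?case
    using energy_step_avg[OF periodic_iter_step_avg[OF assms], of a n a]
    by (simp add: algebra_simps)
qed simp

lemma sum_total_variation_iter_step_avg_le:
  assumes a: "0 < a" "a < 1" and \<phi>: "periodic L \<phi>" "\<And>x. 0 \<le> \<phi> x \<and> \<phi> x \<le> 1"
  shows "(\<Sum>t<n. total_variation L ((step_avg a ^^ t) \<phi>))
           \<le> real L * sqrt (real n) / sqrt (a * (1 - a))"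
proof -
  define c where "c = a * (1 - a)"
  have c: "0 < c" using a by (simp add: c_def)
  define v where "v t = total_variation L ((step_avg a ^^ t) \<phi>)" for t
  define s where "s t = sq_variation L ((step_avg a ^^ t) \<phi>)" for t
  have "c * (\<Sum>t<n. s t) \<le> (\<Sum>x<L. (\<phi> x)\<^sup>2)"
    using energy_iter_step_avg[OF \<phi>(1), where a = a and n = n]
      sum_nonneg[of "{..<L}" "\<lambda>x. ((step_avg a ^^ n) \<phi> x)\<^sup>2"]
    by (simp add: c_def s_def)
  also have "\<dots> \<le> (\<Sum>x<L. 1)"
    using \<phi>(2) by (intro sum_mono) (simp add: power_le_one)
  finally have s_sum: "(\<Sum>t<n. s t) \<le> real L / c"
    using c by (simp add: field_simps)
  have "(\<Sum>t<n. v t)\<^sup>2 \<le> real n * (\<Sum>t<n. (v t)\<^sup>2)"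
    using Cauchy_Schwarz_ineq_sum[of "\<lambda>_. 1" v "{..<n}"] by simp
  also have "\<dots> \<le> real n * (\<Sum>t<n. real L * s t)"
    unfolding v_def s_def by (intro mult_left_mono sum_mono total_variation_sq_le) simp_all
  also have "\<dots> \<le> real n * (real L * (real L / c))"
    using s_sum by (simp add: sum_distrib_left[symmetric] mult_left_mono del: times_divide_eq_right)
  finally have "(\<Sum>t<n. v t) \<le> sqrt (real n * (real L * (real L / c)))"
    by (rule real_le_rsqrt)
  also have "\<dots> = real L * sqrt (real n) / sqrt c"
    by (simp add: real_sqrt_mult real_sqrt_divide)
  finally show ?thesis by (simp add: v_def c_def)
qed

section \<open>Visibility along the walk\<close>

definition list_pos :: "bool list \<Rightarrow> nat \<times> nat" where
  "list_pos xs = (count_true xs, length (filter Not xs))"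

lemma list_pos_append: "list_pos (xs @ ys) = list_pos xs + list_pos ys"
  by (simp add: list_pos_def)

lemma fst_plus_snd_list_pos: "fst (list_pos xs) + snd (list_pos xs) = length xs"
  using sum_length_filter_compl[of id xs] by (simp add: list_pos_def count_true_def)

lemma walk_pos_eq_list_pos: "walk_pos \<omega> i = list_pos (stake i \<omega>)"
proof -
  have "card {j. j < i \<and> \<omega> !! j} = count_true (stake i \<omega>)"
    unfolding count_true_def length_filter_conv_card by (rule arg_cong[where f = card]) auto
  moreover have "card {j. j < i \<and> \<not> \<omega> !! j} = length (filter Not (stake i \<omega>))"
    unfolding length_filter_conv_card by (rule arg_cong[where f = card]) auto
  ultimately show ?thesis by (simp add: walk_pos_def list_pos_def)
qed

definition vis_ind :: "nat \<Rightarrow> nat \<times> nat \<Rightarrow> real" where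
  "vis_ind m q = (if visible m q then 1 else 0)"

definition window_ind :: "nat \<Rightarrow> nat \<Rightarrow> nat \<Rightarrow> bool list \<Rightarrow> real" where
  "window_ind k m i xs = (\<Prod>l<k. vis_ind m (list_pos (take (i + l) xs)))"

lemma prod_vis_ind_bounds:
  "0 \<le> (\<Prod>l\<in>A. vis_ind m (q l))" "(\<Prod>l\<in>A. vis_ind m (q l)) \<le> 1"
  by (simp_all add: vis_ind_def prod_nonneg prod_le_1)

lemma window_ind_bounds: "0 \<le> window_ind k m i xs" "window_ind k m i xs \<le> 1"
  unfolding window_ind_def by (rule prod_vis_ind_bounds)+

lemma window_ind_append:
  "i + k \<le> length xs \<Longrightarrow> window_ind k m i (xs @ ys) = window_ind k m i xs"
  unfolding window_ind_def by (intro prod.cong) auto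

lemma Yv_eq_window_ind: "i + k \<le> N \<Longrightarrow> Yv k m i \<omega> = window_ind k m i (stake N \<omega>)"
  unfolding Yv_def window_ind_def Xv_def vis_ind_def
  by (rule prod.cong) (auto simp: take_stake walk_pos_eq_list_pos min_def)

lemma D_pos: "0 < D m"
  unfolding D_def by (rule prod_pos) (auto simp: prime_gt_0_nat)

lemma visible_add_D_mult: "visible m (a + D m * s, b + D m * t) = visible m (a, b)"
proof -
  have "p dvd D m" if "prime p" "p < m" for p
    unfolding D_def using that by (intro dvd_prodI[where f = id, simplified]) auto
  then show ?thesis
    unfolding visible_def by (auto simp: dvd_add_left_iff)
qed

definition window_prob :: "real \<Rightarrow> nat \<Rightarrow> nat \<Rightarrow> nat \<times> nat \<Rightarrow> real" where
  "window_prob a k m q = list_expect a k (\<lambda>ds. \<Prod>l<k. vis_ind m (q + list_pos (take l ds)))"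

lemma window_prob_bounds: "0 \<le> a \<Longrightarrow> a \<le> 1 \<Longrightarrow> 0 \<le> window_prob a k m q \<and> window_prob a k m q \<le> 1"
  unfolding window_prob_def by (rule list_expect_bounds) (simp_all add: prod_vis_ind_bounds)

lemma window_prob_add_D_mult:
  "window_prob a k m (x + D m * s, y + D m * t) = window_prob a k m (x, y)"
proof -
  have "vis_ind m ((x + D m * s, y + D m * t) + r) = vis_ind m ((x, y) + r)" for r
  proof (cases r)
    case (Pair r1 r2)
    then show ?thesis
      using visible_add_D_mult[of m "x + r1" s "y + r2" t] by (simp add: vis_ind_def algebra_simps)
  qed
  then show ?thesis by (simp add: window_prob_def)
qed

text \<open>\<open>window_prob\<close> at the point \<open>(x, j - x)\<close> of the anti-diagonal \<open>x + y = j\<close>: the second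
  coordinate is congruent to \<open>j - x\<close> modulo \<open>D m\<close> but avoids truncated subtraction, which
  makes the function \<open>D m\<close>-periodic in \<open>x\<close>.\<close>

definition diag_window_prob :: "real \<Rightarrow> nat \<Rightarrow> nat \<Rightarrow> nat \<Rightarrow> nat \<Rightarrow> real" where
  "diag_window_prob a k m j x = window_prob a k m (x, j + (D m - 1) * x)"

lemma periodic_diag_window_prob: "periodic (D m) (diag_window_prob a k m j)"
  unfolding periodic_def diag_window_prob_def
proof
  fix x
  obtain d where d: "D m = Suc d" using D_pos[of m] gr0_implies_Suc by blast
  have "(x + D m, j + (D m - 1) * (x + D m)) = (x + D m * 1, (j + (D m - 1) * x) + D m * (D m - 1))"
    by (simp add: d algebra_simps)
  then show "window_prob a k m (x + D m, j + (D m - 1) * (x + D m))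
      = window_prob a k m (x, j + (D m - 1) * x)"
    by (simp only: window_prob_add_D_mult)
qed

lemma window_prob_eq_diag:
  assumes "x + y = j"
  shows "window_prob a k m (x, y) = diag_window_prob a k m j x"
proof -
  obtain d where d: "D m = Suc d" using D_pos[of m] gr0_implies_Suc by blast
  have "(x, j + (D m - 1) * x) = (x + D m * 0, y + D m * x)"
    using assms by (simp add: d algebra_simps)
  then show ?thesis
    unfolding diag_window_prob_def by (simp only: window_prob_add_D_mult)
qed

lemma list_expect_window_prob:
  "k \<le> N \<Longrightarrow> list_expect a N (\<lambda>ds. \<Prod>l<k. vis_ind m (q + list_pos (take l ds))) = window_prob a k m q"
  unfolding window_prob_def by (rule list_expect_prefix) auto

lemma list_expect_window_ind_cond:
  assumes "length as = u" "u \<le> j" "j + k \<le> N"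
  shows "list_expect a (N - u) (\<lambda>bs. window_ind k m j (as @ bs))
       = (step_avg a ^^ (j - u)) (diag_window_prob a k m j) (count_true as)"
proof -
  define t where "t = j - u"
  have N: "N - u = t + (N - j)" using assms by (simp add: t_def)
  have take_eq: "take (j + l) (as @ cs @ ds) = as @ cs @ take l ds" if "length cs = t" for cs ds l
    using assms that by (simp add: t_def)
  have "list_expect a (N - u) (\<lambda>bs. window_ind k m j (as @ bs))
      = list_expect a t (\<lambda>cs. list_expect a (N - j) (\<lambda>ds. window_ind k m j (as @ cs @ ds)))"
    unfolding N list_expect_append by simp
  also have "\<dots> = list_expect a t (\<lambda>cs. window_prob a k m (list_pos as + list_pos cs))"
  proof (rule list_expect_cong)
    fix cs :: "bool list" assume "length cs = t"
    then have "window_ind k m j (as @ cs @ ds)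
        = (\<Prod>l<k. vis_ind m ((list_pos as + list_pos cs) + list_pos (take l ds)))" for ds
      by (simp only: window_ind_def take_eq) (simp add: list_pos_append add.assoc)
    then show "list_expect a (N - j) (\<lambda>ds. window_ind k m j (as @ cs @ ds))
        = window_prob a k m (list_pos as + list_pos cs)"
      using assms(3) by (simp add: list_expect_window_prob)
  qed
  also have "\<dots> = list_expect a t (\<lambda>cs. diag_window_prob a k m j (count_true as + count_true cs))"
  proof (rule list_expect_cong)
    fix cs :: "bool list" assume "length cs = t"
    then have "fst (list_pos as + list_pos cs) + snd (list_pos as + list_pos cs) = j"
      using fst_plus_snd_list_pos[of as] fst_plus_snd_list_pos[of cs] assms by (simp add: t_def)
    then show "window_prob a k m (list_pos as + list_pos cs)
        = diag_window_prob a k m j (count_true as + count_true cs)"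
      using window_prob_eq_diag by (simp add: list_pos_def)
  qed
  also have "\<dots> = (step_avg a ^^ t) (diag_window_prob a k m j) (count_true as)"
    by (rule list_expect_count_true)
  finally show ?thesis by (simp add: t_def)
qed

lemma list_expect_times_window_ind:
  assumes "u \<le> j" "j + k \<le> N" and f: "\<And>as bs. length as = u \<Longrightarrow> f (as @ bs) = f as"
  shows "list_expect a N (\<lambda>xs. f xs * window_ind k m j xs)
       = list_expect a u (\<lambda>as. f as * (step_avg a ^^ (j - u)) (diag_window_prob a k m j) (count_true as))"
proof -
  have "list_expect a N (\<lambda>xs. f xs * window_ind k m j xs)
      = list_expect a u (\<lambda>as. list_expect a (N - u) (\<lambda>bs. f (as @ bs) * window_ind k m j (as @ bs)))"
    using list_expect_append[of a u "N - u"] assms(1,2) by simp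
  also have "\<dots> = list_expect a u (\<lambda>as. f as * (step_avg a ^^ (j - u)) (diag_window_prob a k m j) (count_true as))"
    using assms by (intro list_expect_cong) (simp add: list_expect_cmult list_expect_window_ind_cond)
  finally show ?thesis .
qed

definition window_cov :: "real \<Rightarrow> nat \<Rightarrow> nat \<Rightarrow> nat \<Rightarrow> nat \<Rightarrow> nat \<Rightarrow> real" where
  "window_cov a N k m i j = list_expect a N (\<lambda>xs. window_ind k m i xs * window_ind k m j xs)
     - list_expect a N (window_ind k m i) * list_expect a N (window_ind k m j)"

lemma window_cov_commute: "window_cov a N k m i j = window_cov a N k m j i"
  by (simp add: window_cov_def mult.commute)

lemma window_cov_le_1:
  assumes "0 \<le> a" "a \<le> 1"
  shows "window_cov a N k m i j \<le> 1"
proof -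
  have "list_expect a N (\<lambda>xs. window_ind k m i xs * window_ind k m j xs) \<le> 1"
    using list_expect_bounds[OF assms, of N 0 "\<lambda>xs. window_ind k m i xs * window_ind k m j xs" 1]
    by (simp add: window_ind_bounds mult_le_one)
  moreover have "0 \<le> list_expect a N (window_ind k m i) * list_expect a N (window_ind k m j)"
    using list_expect_bounds[OF assms, of N 0 _ 1] by (simp add: window_ind_bounds)
  ultimately show ?thesis
    unfolding window_cov_def by linarith
qed

lemma window_cov_le_total_variation:
  assumes a: "0 \<le> a" "a \<le> 1" and "i + k \<le> j" "j + k \<le> N"
  shows "window_cov a N k m i j
       \<le> total_variation (D m) ((step_avg a ^^ (j - (i + k))) (diag_window_prob a k m j))"
proof -
  define u where "u = i + k"
  define W where "W = (\<lambda>as. (step_avg a ^^ (j - u)) (diag_window_prob a k m j) (count_true as))"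
  have u: "u \<le> j" "u \<le> N" using assms by (simp_all add: u_def)
  have window_i: "window_ind k m i (as @ bs) = window_ind k m i as" if "length as = u" for as bs
    using that by (simp add: u_def window_ind_append)
  have "list_expect a N (\<lambda>xs. window_ind k m i xs * window_ind k m j xs)
      = list_expect a u (\<lambda>as. window_ind k m i as * W as)"
    unfolding W_def using u assms by (intro list_expect_times_window_ind window_i)
  moreover have "list_expect a N (window_ind k m j) = list_expect a u W"
    using list_expect_times_window_ind[of u j k N "\<lambda>_. 1"] u assms by (simp add: W_def)
  moreover have "list_expect a N (window_ind k m i) = list_expect a u (window_ind k m i)"
    using u by (intro list_expect_prefix window_i)
  moreover have "list_expect a u (\<lambda>as. window_ind k m i as * W as)
      - list_expect a u (window_ind k m i) * list_expect a u W
      \<le> total_variation (D m) ((step_avg a ^^ (j - u)) (diag_window_prob a k m j))"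
    using a window_ind_bounds unfolding W_def
    by (intro list_expect_cov_le total_variation_nonneg periodic_diff_le_total_variation
        periodic_iter_step_avg periodic_diag_window_prob D_pos) auto
  ultimately show ?thesis by (simp add: window_cov_def u_def)
qed

section \<open>Covariances and the variance\<close>

lemma sum_sum_le_of_band_decay:
  fixes c T :: "nat \<Rightarrow> nat \<Rightarrow> real"
  assumes T_nonneg: "\<And>j t. 0 \<le> T j t" and T_sum: "\<And>j. (\<Sum>t<n. T j t) \<le> B"
    and c_commute: "\<And>i j. c i j = c j i" and c_le_1: "\<And>i j. c i j \<le> 1"
    and c_far: "\<And>i j. i + k \<le> j \<Longrightarrow> j \<le> n \<Longrightarrow> c i j \<le> T j (j - (i + k))"
  shows "(\<Sum>i\<in>{1..n}. \<Sum>j\<in>{1..n}. c i j) \<le> 2 * real n * B + 2 * real k * real n"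
proof -
  define far where "far i j = (if i + k \<le> j then T j (j - (i + k)) else 0)" for i j
  define near where "near i j = (if i < j + k \<and> j < i + k then 1 else 0 :: real)" for i j
  have c_le: "c i j \<le> far i j + far j i + near i j" if "i \<le> n" "j \<le> n" for i j
  proof -
    have nonneg: "0 \<le> far i j" "0 \<le> far j i" "0 \<le> near i j"
      by (simp_all add: far_def near_def T_nonneg)
    consider "i + k \<le> j" | "j + k \<le> i" | "i < j + k \<and> j < i + k" by linarith
    then show ?thesis
    proof cases
      case 1
      then show ?thesis using c_far[of i j] nonneg that by (simp add: far_def)
    next
      case 2
      then show ?thesis using c_far[of j i] c_commute[of i j] nonneg that by (simp add: far_def)
    next
      case 3
      then show ?thesis using c_le_1[of i j] nonneg by (simp add: near_def)
    qed
  qed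
  have far_col: "(\<Sum>i\<in>{1..n}. far i j) \<le> B" if "j \<le> n" for j
  proof -
    define S where "S = {i\<in>{1..n}. i + k \<le> j}"
    have "(\<Sum>i\<in>{1..n}. far i j) = (\<Sum>i\<in>S. T j (j - (i + k)))"
      unfolding far_def S_def by (rule sum.inter_filter[symmetric]) simp
    also have "\<dots> = (\<Sum>t\<in>(\<lambda>i. j - (i + k)) ` S. T j t)"
      by (rule sum.reindex[symmetric, unfolded comp_def]) (auto simp: inj_on_def S_def)
    also have "\<dots> \<le> (\<Sum>t<n. T j t)"
      using that by (intro sum_mono2) (auto simp: S_def T_nonneg)
    finally show ?thesis using T_sum[of j] by linarith
  qed
  have far_sum: "(\<Sum>i\<in>{1..n}. \<Sum>j\<in>{1..n}. far i j) \<le> real n * B"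
  proof -
    have "(\<Sum>i\<in>{1..n}. \<Sum>j\<in>{1..n}. far i j) = (\<Sum>j\<in>{1..n}. \<Sum>i\<in>{1..n}. far i j)"
      by (rule sum.swap)
    also have "\<dots> \<le> (\<Sum>j\<in>{1..n}. B)"
      by (intro sum_mono far_col) simp
    finally show ?thesis by simp
  qed
  have near_row: "(\<Sum>j\<in>{1..n}. near i j) \<le> 2 * real k" for i
  proof -
    have "(\<Sum>j\<in>{1..n}. near i j) = (\<Sum>j\<in>{j\<in>{1..n}. i < j + k \<and> j < i + k}. 1)"
      unfolding near_def by (rule sum.inter_filter[symmetric]) simp
    also have "\<dots> = real (card {j\<in>{1..n}. i < j + k \<and> j < i + k})"
      by simp
    also have "card {j\<in>{1..n}. i < j + k \<and> j < i + k} \<le> card {i - k..<i + k}"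
      by (rule card_mono) auto
    finally show ?thesis by simp
  qed
  have "(\<Sum>i\<in>{1..n}. \<Sum>j\<in>{1..n}. c i j)
      \<le> (\<Sum>i\<in>{1..n}. \<Sum>j\<in>{1..n}. far i j) + (\<Sum>i\<in>{1..n}. \<Sum>j\<in>{1..n}. far j i)
        + (\<Sum>i\<in>{1..n}. \<Sum>j\<in>{1..n}. near i j)"
    unfolding sum.distrib[symmetric] by (intro sum_mono c_le) auto
  also have "\<dots> \<le> real n * B + real n * B + real n * (2 * real k)"
  proof -
    have "(\<Sum>i\<in>{1..n}. \<Sum>j\<in>{1..n}. far j i) = (\<Sum>i\<in>{1..n}. \<Sum>j\<in>{1..n}. far i j)"
      by (rule sum.swap)
    moreover have "(\<Sum>i\<in>{1..n}. \<Sum>j\<in>{1..n}. near i j) \<le> real n * (2 * real k)"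
      using sum_mono[of "{1..n}" _ "\<lambda>_. 2 * real k", OF near_row] by simp
    ultimately show ?thesis
      using far_sum by linarith
  qed
  finally show ?thesis by (simp add: algebra_simps)
qed

definition list_Sbar :: "nat \<Rightarrow> nat \<Rightarrow> nat \<Rightarrow> bool list \<Rightarrow> real" where
  "list_Sbar n k m xs = (1 / real n) * (\<Sum>i=1..n. window_ind k m i xs)"

lemma Sbar_eq_list_Sbar: "Sbar n k m \<omega> = list_Sbar n k m (stake (n + k) \<omega>)"
  unfolding Sbar_def list_Sbar_def
  by (intro arg_cong[where f = "\<lambda>x. _ * x"] sum.cong) (auto intro: Yv_eq_window_ind)

lemma var_Sbar_eq_sum_window_cov:
  assumes "0 \<le> a" "a \<le> 1"
  shows "var (walk_space a) (Sbar n k m)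
       = (1 / real n)\<^sup>2 * (\<Sum>i\<in>{1..n}. \<Sum>j\<in>{1..n}. window_cov a (n + k) k m i j)"
proof -
  let ?E = "list_expect a (n + k)"
  have "var (walk_space a) (Sbar n k m) = ?E (\<lambda>xs. (list_Sbar n k m xs - ?E (list_Sbar n k m))\<^sup>2)"
    unfolding var_def Sbar_eq_list_Sbar walk_space_def integral_stake[OF assms]
    by (rule integral_stake[OF assms])
  also have "\<dots> = ?E (\<lambda>xs. (list_Sbar n k m xs)\<^sup>2) - (?E (list_Sbar n k m))\<^sup>2"
    by (rule list_expect_variance)
  also have "\<dots> = (1 / real n)\<^sup>2 * (\<Sum>i\<in>{1..n}. \<Sum>j\<in>{1..n}. window_cov a (n + k) k m i j)"
  proof -
    have "(list_Sbar n k m xs)\<^sup>2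
        = (1 / real n)\<^sup>2 * (\<Sum>i\<in>{1..n}. \<Sum>j\<in>{1..n}. window_ind k m i xs * window_ind k m j xs)" for xs
      by (simp add: list_Sbar_def power_mult_distrib power2_eq_square sum_product)
    moreover have "?E (list_Sbar n k m) = 1 / real n * (\<Sum>i\<in>{1..n}. ?E (window_ind k m i))"
      unfolding list_Sbar_def[abs_def] list_expect_cmult list_expect_sum ..
    then have "(?E (list_Sbar n k m))\<^sup>2
        = (1 / real n)\<^sup>2 * (\<Sum>i\<in>{1..n}. \<Sum>j\<in>{1..n}. ?E (window_ind k m i) * ?E (window_ind k m j))"
      by (simp add: power_mult_distrib power2_eq_square sum_product)
    ultimately show ?thesis
      by (simp add: list_expect_cmult list_expect_sum window_cov_def sum_subtractf right_diff_distrib)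
  qed
  finally show ?thesis .
qed

lemma sum_window_cov_le:
  assumes "0 < \<alpha>" "\<alpha> < 1"
  shows "(\<Sum>i\<in>{1..n}. \<Sum>j\<in>{1..n}. window_cov \<alpha> (n + k) k m i j)
       \<le> 2 * real n * (real (D m) * sqrt (real n) / sqrt (\<alpha> * (1 - \<alpha>))) + 2 * real k * real n"
proof (rule sum_sum_le_of_band_decay[where
      T = "\<lambda>j t. total_variation (D m) ((step_avg \<alpha> ^^ t) (diag_window_prob \<alpha> k m j))"])
  have \<alpha>: "0 \<le> \<alpha>" "\<alpha> \<le> 1" using assms by simp_all
  show "(\<Sum>t<n. total_variation (D m) ((step_avg \<alpha> ^^ t) (diag_window_prob \<alpha> k m j)))
      \<le> real (D m) * sqrt (real n) / sqrt (\<alpha> * (1 - \<alpha>))" for j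
    using assms window_prob_bounds[OF \<alpha>]
    by (intro sum_total_variation_iter_step_avg_le periodic_diag_window_prob)
      (simp_all add: diag_window_prob_def)
  show "window_cov \<alpha> (n + k) k m i j \<le> 1" for i j
    using \<alpha> by (rule window_cov_le_1)
  show "window_cov \<alpha> (n + k) k m i j
      \<le> total_variation (D m) ((step_avg \<alpha> ^^ (j - (i + k))) (diag_window_prob \<alpha> k m j))"
    if "i + k \<le> j" "j \<le> n" for i j
    using \<alpha> that by (intro window_cov_le_total_variation) simp_all
qed (simp_all add: total_variation_nonneg window_cov_commute)

lemma var_Sbar_le:
  assumes "0 < \<alpha>" "\<alpha> < 1" "1 \<le> n"
  shows "var (walk_space \<alpha>) (Sbar n k m)
       \<le> (2 / sqrt (\<alpha> * (1 - \<alpha>)) * real (D m) + 2 * real k / sqrt (real n)) / sqrt (real n)"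
proof -
  have "var (walk_space \<alpha>) (Sbar n k m) \<le> (1 / real n)\<^sup>2
      * (2 * real n * (real (D m) * sqrt (real n) / sqrt (\<alpha> * (1 - \<alpha>))) + 2 * real k * real n)"
    using assms sum_window_cov_le[OF assms(1,2)]
    by (simp add: var_Sbar_eq_sum_window_cov mult_left_mono)
  also have "\<dots> = (2 / sqrt (\<alpha> * (1 - \<alpha>)) * real (D m) + 2 * real k / sqrt (real n)) / sqrt (real n)"
    using assms(3) real_sqrt_mult_self[of "real n"]
    by (simp add: field_simps power2_eq_square del: real_sqrt_mult_self)
  finally show ?thesis .
qed

theorem proposition5:
  fixes \<alpha> :: real and k :: nat
  assumes "0 < \<alpha>" and "\<alpha> < 1" and "1 \<le> k"
  shows "\<exists>C>0. \<forall>m n. 1 \<le> m \<longrightarrow> 1 \<le> n \<longrightarrow>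
           var (walk_space \<alpha>) (Sbar n k m) \<le> C * real (D m) ^ 4 / sqrt (real n)"
proof (intro exI[of _ "2 / sqrt (\<alpha> * (1 - \<alpha>)) + 2 * real k"] conjI allI impI)
  define c where "c = 2 / sqrt (\<alpha> * (1 - \<alpha>))"
  have c: "0 < c" using assms by (simp add: c_def)
  then show "0 < c + 2 * real k" by (simp add: add_pos_nonneg)
  fix m n :: nat assume n: "1 \<le> n"
  define d where "d = real (D m)"
  have d: "d \<le> d ^ 4" "1 \<le> d ^ 4"
    using D_pos[of m] power_increasing[of 1 4 d] by (simp_all add: d_def)
  have "2 * real k / sqrt (real n) \<le> 2 * real k"
    using n by (simp add: divide_le_eq mult_le_cancel_left1)
  also have "\<dots> \<le> 2 * real k * d ^ 4"
    using d(2) by (simp add: mult_le_cancel_left1)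
  finally have "(c * d + 2 * real k / sqrt (real n)) / sqrt (real n) \<le> (c + 2 * real k) * d ^ 4 / sqrt (real n)"
    using c d by (simp add: divide_right_mono add_mono mult_left_mono distrib_right)
  then show "var (walk_space \<alpha>) (Sbar n k m) \<le> (c + 2 * real k) * real (D m) ^ 4 / sqrt (real n)"
    using var_Sbar_le[OF assms(1,2) n, of k m] by (simp add: c_def d_def)
qed

end
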